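(* Let $\mathcal I$ be a canonical instance and run Algorithm 1 (described below) on it. At every moment of the run, every agent $a_{i,j}$ satisfies $v_{i,j}(A_{i,j})\le 3w_i$; in particular the final bundles satisfy $v_{i,j}(A_{i,j})\le 3w_i$. (Algorithm 1: start with empty bundles and all agents present; for $h=1,\dots,m$: let $\mathcal N_h$ be the present agents $a_{i,j}$ with $v_{i,j}(e_h)\le w_i$; give $e_h$ to an agent of $\mathcal N_h$ minimizing $v_{i,j}(e_h)$, ties broken in favor of the smallest weight and then arbitrarily; if the receiver now has $v_{i,j}(A_{i,j})\ge 3w_i$, she is removed from the present agents.)
   Context: Chore-allocation instance: agents, a finite set $\mathcal M=\{e_1,\dots,e_m\}$ of indivisible items, positive weights, additive cost functions $v:2^{\mathcal M}\to\mathbb R_{\ge0}$. The weighted maximin share of agent $a$ with weight $w_a$ and cost $v_a$ is $\mathsf{WMMS}_a=w_a\min_{\text{allocations }(B_b)_b}\max_{b}\frac{v_a(B_b)}{w_b}$, allocations being ordered partitions of $\mathcal M$ into one (possibly empty) bundle per agent. An instance is canonical if: (i) $\max$ weight is $w_1$, weights sum to $1$, and every weight equals $w_1/2^p$ for some nonnegative integer $p$; (ii) every agent's total cost $v(\mathcal M)=1$, and every single-item cost is either $0$ or $w_1/2^p$ for some nonnegative integer $p$; (iii) every agent has $v(e_1)\ge\cdots\ge v(e_m)$; (iv) every agent's $\mathsf{WMMS}$ equals her weight. Agents are partitioned into groups $G_1,\dots,G_k$ by weight, all agents of $G_i$ having weight $w_i$, with $w_1>\cdots>w_k$; $G_i=\{a_{i,1},\dots,a_{i,n_i}\}$,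 and $v_{i,j},A_{i,j}$ denote the cost function and current bundle of $a_{i,j}$. *)

theory Defs
  imports Complex_Main "HOL-Library.FuncSet"
begin

(* Agents form a finite set N of type 'a; items are e_1..e_m, represented by the
naturals 1..m. *)

definition cost :: "('a \<Rightarrow> nat \<Rightarrow> real) \<Rightarrow> 'a \<Rightarrow> nat set \<Rightarrow> real" where
  "cost v a B = (\<Sum>e\<in>B. v a e)"

(* An allocation is a map from items {1..m} to agents in N (extensional);
the bundle_of of agent b is the preimage of b. *)

definition bundle_of :: "(nat \<Rightarrow> 'a) \<Rightarrow> nat \<Rightarrow> 'a \<Rightarrow> nat set" where
  "bundle_of B m b = {e \<in> {1..m}. B e = b}"

definition WMMS :: "'a set \<Rightarrow> ('a \<Rightarrow> real) \<Rightarrow> ('a \<Rightarrow> nat \<Rightarrow> real) \<Rightarrow> nat \<Rightarrow> 'a \<Rightarrow> real" where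
  "WMMS N w v m a = w a * Min ((\<lambda>B. MAX b\<in>N. cost v a (bundle_of B m b) / w b) ` ({1..m} \<rightarrow>\<^sub>E N))"

definition canonical :: "'a set \<Rightarrow> ('a \<Rightarrow> real) \<Rightarrow> ('a \<Rightarrow> nat \<Rightarrow> real) \<Rightarrow> nat \<Rightarrow> bool" where
  "canonical N w v m \<longleftrightarrow>
     finite N \<and> N \<noteq> {} \<and> (\<forall>a\<in>N. w a > 0) \<and>
     (\<Sum>a\<in>N. w a) = 1 \<and>
     (\<forall>a\<in>N. \<exists>p::nat. w a = Max (w ` N) / 2 ^ p) \<and>
     (\<forall>a\<in>N. cost v a {1..m} = 1) \<and>
     (\<forall>a\<in>N. \<forall>e\<in>{1..m}. v a e = 0 \<or> (\<exists>p::nat. v a e = Max (w ` N) / 2 ^ p)) \<and>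
     (\<forall>a\<in>N. \<forall>e e'. 1 \<le> e \<longrightarrow> e \<le> e' \<longrightarrow> e' \<le> m \<longrightarrow> v a e' \<le> v a e) \<and>
     (\<forall>a\<in>N. WMMS N w v m a = w a)"

(* Reachable states of Algorithm 1: (h, A, P) where h items e_1..e_h have been
processed, A is the current bundle_of map and P the set of present agents.
Ties among minimisers of the item cost are broken in favour of the smallest weight,
and then arbitrarily (nondeterminism). *)

inductive alg1_reach :: "'a set \<Rightarrow> ('a \<Rightarrow> real) \<Rightarrow> ('a \<Rightarrow> nat \<Rightarrow> real) \<Rightarrow> nat
    \<Rightarrow> nat \<Rightarrow> ('a \<Rightarrow> nat set) \<Rightarrow> 'a set \<Rightarrow> bool"
  for N w v m where
  init: "alg1_reach N w v m 0 (\<lambda>_. {}) N"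
| step: "\<lbrakk> alg1_reach N w v m h A P; h < m;
          b \<in> P; v b (Suc h) \<le> w b;
          \<forall>c\<in>P. v c (Suc h) \<le> w c \<longrightarrow> v b (Suc h) \<le> v c (Suc h);
          \<forall>c\<in>P. v c (Suc h) \<le> w c \<longrightarrow> v c (Suc h) = v b (Suc h) \<longrightarrow> w b \<le> w c \<rbrakk>
        \<Longrightarrow> alg1_reach N w v m (Suc h) (A(b := insert (Suc h) (A b)))
              (if cost v b (insert (Suc h) (A b)) \<ge> 3 * w b then P - {b} else P)"

end

theory Submission
  imports Defs
begin

text \<open>Items arrive in order of non-increasing cost, and in a canonical instance every
nonzero cost and every weight is a power-of-two fraction of the maximal weight. So when a
present agent receives an item of positive cost \<open>x \<le> w\<close>, her weight and the cost of
each item already in her bundle are integer multiples of \<open>x\<close>. Her current cost is below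
\<open>3 w\<close> and a multiple of \<open>x\<close>, hence at most \<open>3 w - x\<close>, and after receiving the item it
is still at most \<open>3 w\<close>. Once it reaches \<open>3 w\<close> she leaves and her bundle is frozen.\<close>

definition nat_multiple :: "real \<Rightarrow> real \<Rightarrow> bool" where
  "nat_multiple x y \<longleftrightarrow> (\<exists>n::nat. y = of_nat n * x)"

lemma nat_multiple_mult_left:
  assumes "nat_multiple x y"
  shows "nat_multiple x (of_nat k * y)"
proof -
  obtain n :: nat where "y = of_nat n * x"
    using assms by (auto simp: nat_multiple_def)
  then have "of_nat k * y = of_nat (k * n) * x"
    by simp
  then show ?thesis
    unfolding nat_multiple_def by blast
qed

lemma nat_multiple_sum:
  fixes g :: "'a \<Rightarrow> real"
  assumes "finite B" and "\<And>e. e \<in> B \<Longrightarrow> nat_multiple x (g e)"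
  shows "nat_multiple x (sum g B)"
proof -
  obtain f :: "'a \<Rightarrow> nat" where f: "\<And>e. e \<in> B \<Longrightarrow> g e = of_nat (f e) * x"
    using assms(2) unfolding nat_multiple_def by metis
  have "sum g B = of_nat (sum f B) * x"
    by (simp add: f sum_distrib_right)
  then show ?thesis
    unfolding nat_multiple_def by blast
qed

lemma nat_multiple_less_imp_add_le:
  assumes "0 < x" "nat_multiple x c" "nat_multiple x d" "c < d"
  shows "c + x \<le> d"
proof -
  obtain k n :: nat where c: "c = of_nat k * x" and d: "d = of_nat n * x"
    using assms(2,3) by (auto simp: nat_multiple_def)
  have "k < n"
    using assms(1,4) c d by (simp add: mult_less_cancel_right_pos)
  then have "of_nat k + 1 \<le> (of_nat n :: real)"
    by linarith
  then have "(of_nat k + 1) * x \<le> of_nat n * x"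
    using assms(1) by (intro mult_right_mono) auto
  then show ?thesis
    using c d by (simp add: distrib_right)
qed

lemma pow2_fraction_nat_multiple:
  fixes M :: real
  assumes "0 < M" "M / 2 ^ p \<le> M / 2 ^ q"
  shows "nat_multiple (M / 2 ^ p) (M / 2 ^ q)"
proof -
  have "q \<le> p"
  proof (rule ccontr)
    assume "\<not> q \<le> p"
    then have "M / 2 ^ q < M / 2 ^ p"
      using assms(1) by (simp add: divide_strict_left_mono power_strict_increasing)
    then show False
      using assms(2) by simp
  qed
  then have "(2::real) ^ p = 2 ^ (p - q) * 2 ^ q"
    by (simp add: power_add[symmetric])
  then have "M / 2 ^ q = of_nat (2 ^ (p - q)) * (M / 2 ^ p)"
    by simp
  then show ?thesis
    unfolding nat_multiple_def by blast
qed

lemma canonical_max_weight_pos: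
  assumes "canonical N w v m"
  shows "0 < Max (w ` N)"
proof -
  have "finite N" "N \<noteq> {}" "\<forall>a\<in>N. 0 < w a"
    using assms by (auto simp: canonical_def)
  then obtain a where "a \<in> N" "0 < w a" "w a \<le> Max (w ` N)"
    by fastforce
  then show ?thesis
    by linarith
qed

lemma canonical_insert_cost_le:
  assumes can: "canonical N w v m" and "b \<in> N" and e: "e \<in> {1..m}"
    and B: "B \<subseteq> {1..<e}" and "v b e \<le> w b" and "cost v b B < 3 * w b"
  shows "cost v b (insert e B) \<le> 3 * w b"
proof -
  have "finite B" "e \<notin> B"
    using B finite_subset by auto
  then have cost_insert: "cost v b (insert e B) = cost v b B + v b e"
    by (simp add: cost_def)
  show ?thesis
  proof (cases "v b e = 0")
    case True
    then show ?thesis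
      using cost_insert \<open>cost v b B < 3 * w b\<close> by simp
  next
    case False
    define M where "M = Max (w ` N)"
    have "0 < M"
      unfolding M_def using canonical_max_weight_pos[OF can] .
    have pow2_cost: "\<And>e'. e' \<in> {1..m} \<Longrightarrow> v b e' = 0 \<or> (\<exists>p::nat. v b e' = M / 2 ^ p)"
      using can \<open>b \<in> N\<close> unfolding canonical_def M_def by blast
    obtain p :: nat where p: "v b e = M / 2 ^ p"
      using pow2_cost[OF e] False by blast
    have "0 < v b e"
      using p \<open>0 < M\<close> by simp
    have can_mono: "\<And>e e'. 1 \<le> e' \<Longrightarrow> e' \<le> e \<Longrightarrow> e \<le> m \<Longrightarrow> v b e \<le> v b e'"
      using can \<open>b \<in> N\<close> unfolding canonical_def by blast
    have "nat_multiple (v b e) (v b e')" if "e' \<in> B" for e'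
    proof -
      have "e' \<in> {1..m}" "e' \<le> e" "e \<le> m"
        using that B e by auto
      then have "v b e \<le> v b e'"
        using can_mono \<open>e \<le> m\<close> by simp
      then obtain q :: nat where "v b e' = M / 2 ^ q"
        using pow2_cost[OF \<open>e' \<in> {1..m}\<close>] \<open>0 < v b e\<close> by auto
      then show ?thesis
        using pow2_fraction_nat_multiple[OF \<open>0 < M\<close>] p \<open>v b e \<le> v b e'\<close> by simp
    qed
    then have "nat_multiple (v b e) (cost v b B)"
      unfolding cost_def using nat_multiple_sum[OF \<open>finite B\<close>] by blast
    moreover have "nat_multiple (v b e) (3 * w b)"
    proof -
      obtain q :: nat where "w b = M / 2 ^ q"
        using can \<open>b \<in> N\<close> unfolding canonical_def M_def by blast
      then have "nat_multiple (v b e) (w b)"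
        using pow2_fraction_nat_multiple[OF \<open>0 < M\<close>] p \<open>v b e \<le> w b\<close> by simp
      then show ?thesis
        using nat_multiple_mult_left[where k = 3] by simp
    qed
    ultimately show ?thesis
      using nat_multiple_less_imp_add_le \<open>0 < v b e\<close> \<open>cost v b B < 3 * w b\<close> cost_insert
      by simp
  qed
qed

lemma alg1_reach_present_subset:
  "alg1_reach N w v m h A P \<Longrightarrow> P \<subseteq> N"
  by (induction rule: alg1_reach.induct) auto

lemma alg1_reach_bundle_subset:
  "alg1_reach N w v m h A P \<Longrightarrow> A a \<subseteq> {1..h}"
proof (induction arbitrary: a rule: alg1_reach.induct)
  case init
  then show ?case by simp
next
  case (step h A P b)
  have "A c \<subseteq> {1..Suc h}" for c
    using step.IH[of c] by auto
  then show ?case by simp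
qed

lemma alg1_reach_cost_bounds:
  assumes can: "canonical N w v m"
  shows "alg1_reach N w v m h A P \<Longrightarrow>
    (\<forall>a\<in>P. cost v a (A a) < 3 * w a) \<and> (\<forall>a\<in>N. cost v a (A a) \<le> 3 * w a)"
proof (induction rule: alg1_reach.induct)
  case init
  then show ?case
    using can by (auto simp: canonical_def cost_def)
next
  case (step h A P b)
  have "b \<in> N"
    using alg1_reach_present_subset step.hyps(1,3) by blast
  moreover have "Suc h \<in> {1..m}"
    using step.hyps(2) by simp
  moreover have "A b \<subseteq> {1..<Suc h}"
    using alg1_reach_bundle_subset[OF step.hyps(1)] by fastforce
  moreover have "cost v b (A b) < 3 * w b"
    using step.IH step.hyps(3) by blast
  ultimately have "cost v b (insert (Suc h) (A b)) \<le> 3 * w b"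
    using canonical_insert_cost_le[OF can] step.hyps(4) by blast
  then show ?case
    using step.IH by auto
qed

theorem mainTheorem8:
  fixes N :: "'a set" and w :: "'a \<Rightarrow> real" and v :: "'a \<Rightarrow> nat \<Rightarrow> real" and m :: nat
  assumes "canonical N w v m"
    and "alg1_reach N w v m h A P"
    and "a \<in> N"
  shows "cost v a (A a) \<le> 3 * w a"
  using alg1_reach_cost_bounds[OF assms(1,2)] assms(3) by blast

end
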